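(* Let $r\le s$ be positive integers and $M\cong\mathbb{A}^{rs}$ the space of complex $r\times s$ matrices, with arc space $M_\infty$ acted on by $G_\infty$ where $G=GL_r\times GL_s$. For pre-partitions $\lambda,\mu$ of length at most $r$, let $O_\lambda,O_\mu\subset M_\infty$ be the associated orbits. Then $O_\mu$ is contained in the Zariski closure of $O_\lambda$ if and only if \[ \lambda_{r-i}+\lambda_{r-i+1}+\dots+\lambda_r\ \le\ \mu_{r-i}+\mu_{r-i+1}+\dots+\mu_r \quad\text{for all } i\in\{0,\dots,r-1\}. \] In other words, the map $\lambda\mapsto O_\lambda$ is an order-reversing isomorphism from the set of pre-partitions of length at most $r$ ordered by co-domination onto the set of $G_\infty$-orbits in $M_\infty$ ordered by "$O'\le O$ iff $O'$ is contained in the closure of $O$".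
   Context: For a variety $X$ over $\mathbb{C}$, the arc space $X_\infty$ is the inverse limit of the jet schemes $X_n$ (which represent $A\mapsto\mathrm{Hom}(\mathrm{Spec}\,A[t]/(t^{n+1}),X)$); its $\mathbb{C}$-points for $X=M$ are $r\times s$ matrices with entries in $\mathbb{C}[[t]]$. The group $G=GL_r\times GL_s$ acts on $M$ by $(g,h)\cdot A=gAh^{-1}$, and functoriality gives an action of the group $G_\infty$ (pairs of invertible matrices over $\mathbb{C}[[t]]$) on $M_\infty$. Let $\overline{\mathbb N}=\mathbb N\cup\{\infty\}$ with $\infty>n$ and $\infty+n=\infty$ for all $n$. A pre-partition of length at most $r$ is a sequence $\lambda=(\lambda_1\ge\lambda_2\ge\dots\ge\lambda_r\ge0)$ of elements of $\overline{\mathbb N}$. For such $\lambda$, $\delta_\lambda$ is the $r\times s$ matrix over $\mathbb{C}[[t]]$ whose first $s-r$ columns are zero and whose last $r$ columns form the diagonal matrix $\mathrm{diag}(t^{\lambda_1},\dots,t^{\lambda_r})$, with the convention $t^\infty=0$; $O_\lambda$ is the $G_\infty$-orbit of $\delta_\lambda$. Co-domination: $\lambda\lhd\mu$ iff $\lambda_i+\dots+\lambda_r\le\mu_i+\dots+\mu_r$ for all $i$. *)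

theory Defs
  imports "Jordan_Normal_Form.Matrix" "HOL-Computational_Algebra.Formal_Power_Series"
          "HOL-Library.Extended_Nat"
begin

text \<open>C-points of the arc space M_infty of r x s matrices: r x s matrices over C[[t]].\<close>
definition arc_points :: "nat \<Rightarrow> nat \<Rightarrow> complex fps mat set" where
  "arc_points r s = carrier_mat r s"

definition arc_orbit :: "nat \<Rightarrow> nat \<Rightarrow> complex fps mat \<Rightarrow> complex fps mat set" where
  "arc_orbit r s A = {B. \<exists>g h hinv. g \<in> carrier_mat r r \<and> invertible_mat g \<and>
       h \<in> carrier_mat s s \<and> hinv \<in> carrier_mat s s \<and>
       h * hinv = 1\<^sub>m s \<and> hinv * h = 1\<^sub>m s \<and> B = g * A * hinv}"

text \<open>t^n with the convention t^infty = 0.\<close>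
definition tpow :: "enat \<Rightarrow> complex fps" where
  "tpow n = (case n of enat k \<Rightarrow> fps_X ^ k | \<infinity> \<Rightarrow> 0)"

text \<open>Pre-partition of length at most r, indexed lambda_1,...,lambda_r (zero elsewhere).\<close>
definition prepartition :: "nat \<Rightarrow> (nat \<Rightarrow> enat) \<Rightarrow> bool" where
  "prepartition r lam \<longleftrightarrow> (\<forall>i j. 1 \<le> i \<longrightarrow> i \<le> j \<longrightarrow> j \<le> r \<longrightarrow> lam j \<le> lam i)
      \<and> (\<forall>i. (i = 0 \<or> r < i) \<longrightarrow> lam i = 0)"

text \<open>delta_lambda: first s-r columns zero, last r columns diag(t^lambda_1,...,t^lambda_r)
  (0-based row i, column j).\<close>
definition delta :: "nat \<Rightarrow> nat \<Rightarrow> (nat \<Rightarrow> enat) \<Rightarrow> complex fps mat" where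
  "delta r s lam = mat r s (\<lambda>(i, j). if j = (s - r) + i then tpow (lam (i + 1)) else 0)"

definition arc_coords :: "nat \<Rightarrow> nat \<Rightarrow> complex fps mat \<Rightarrow> (nat \<times> nat \<times> nat) \<Rightarrow> complex" where
  "arc_coords r s A = (\<lambda>(i, j, k). if i < r \<and> j < s then fps_nth (A $$ (i, j)) k else 0)"

text \<open>Polynomial functions in finitely many of the coordinates (the coordinate ring of M_infty).\<close>
inductive_set polyfun :: "(((nat \<times> nat \<times> nat) \<Rightarrow> complex) \<Rightarrow> complex) set" where
  const: "(\<lambda>x. c) \<in> polyfun"
| var: "(\<lambda>x. x v) \<in> polyfun"
| add: "p \<in> polyfun \<Longrightarrow> q \<in> polyfun \<Longrightarrow> (\<lambda>x. p x + q x) \<in> polyfun"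
| mult: "p \<in> polyfun \<Longrightarrow> q \<in> polyfun \<Longrightarrow> (\<lambda>x. p x * q x) \<in> polyfun"

definition zariski_closure :: "nat \<Rightarrow> nat \<Rightarrow> complex fps mat set \<Rightarrow> complex fps mat set" where
  "zariski_closure r s S = {A \<in> arc_points r s. \<forall>p \<in> polyfun.
      (\<forall>B \<in> S. p (arc_coords r s B) = 0) \<longrightarrow> p (arc_coords r s A) = 0}"

end

theory Submission
  imports Defs "Jordan_Normal_Form.Determinant"
begin

text \<open>
  Closures of orbits are unions of orbits, so it suffices to decide when \<delta>_\<mu> lies in the closure of
  the orbit of \<delta>_\<lambda>.

  Sufficiency: among pre-partitions, co-domination is generated by raising one part and by moving a
  unit from a part to a later, strictly smaller one. Each move is a degeneration: row and column
  operations produce matrices \<delta>_\<lambda>' + c E, c \<noteq> 0, in the orbit of \<delta>_\<lambda>, and letting c \<rightarrow> 0 gives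
  \<delta>_\<lambda>'. Infinite parts of \<mu> are reached as limits of large finite truncations.

  Necessity: every m \<times> m minor of a matrix in the orbit of \<delta>_\<lambda> is divisible by
  t^(\<lambda>_(r-m+1) + \<dots> + \<lambda>_r), a condition expressed by the vanishing of finitely many coefficients,
  hence closed, whereas the minor of \<delta>_\<mu> on its last m rows and columns equals
  t^(\<mu>_(r-m+1) + \<dots> + \<mu>_r).
\<close>

section \<open>Polynomial functions and the Zariski closure\<close>

definition coord_fps :: "((nat \<times> nat \<times> nat) \<Rightarrow> complex) \<Rightarrow> nat \<Rightarrow> nat \<Rightarrow> complex fps" where
  "coord_fps x i j = Abs_fps (\<lambda>k. x (i, j, k))"

definition fps_polyfun :: "(((nat \<times> nat \<times> nat) \<Rightarrow> complex) \<Rightarrow> complex fps) \<Rightarrow> bool" where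
  "fps_polyfun F \<longleftrightarrow> (\<forall>n. (\<lambda>x. fps_nth (F x) n) \<in> polyfun)"

lemma polyfun_sum: "finite I \<Longrightarrow> (\<And>i. i \<in> I \<Longrightarrow> f i \<in> polyfun) \<Longrightarrow> (\<lambda>x. \<Sum>i\<in>I. f i x) \<in> polyfun"
  by (induction I rule: finite_induct) (auto intro: polyfun.intros polyfun.const[of 0, simplified])

lemma polyfun_subst: "p \<in> polyfun \<Longrightarrow> (\<And>v. \<sigma> v \<in> polyfun) \<Longrightarrow> (\<lambda>x. p (\<lambda>v. \<sigma> v x)) \<in> polyfun"
  by (induction p rule: polyfun.induct) (auto intro: polyfun.intros)

lemma polyfun_tendsto:
  "p \<in> polyfun \<Longrightarrow> (\<And>v. ((\<lambda>n. X n v) \<longlongrightarrow> x v) F) \<Longrightarrow> ((\<lambda>n. p (X n)) \<longlongrightarrow> p x) F"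
  by (induction p rule: polyfun.induct) (auto intro!: tendsto_intros)

lemma fps_polyfun_const: "fps_polyfun (\<lambda>x. c)"
  unfolding fps_polyfun_def by (simp add: polyfun.const)

lemma fps_polyfun_coord: "fps_polyfun (\<lambda>x. coord_fps x i j)"
  unfolding fps_polyfun_def coord_fps_def by (simp add: polyfun.var)

lemma fps_polyfun_add: "fps_polyfun F \<Longrightarrow> fps_polyfun G \<Longrightarrow> fps_polyfun (\<lambda>x. F x + G x)"
  unfolding fps_polyfun_def by (simp add: polyfun.add)

lemma fps_polyfun_mult: "fps_polyfun F \<Longrightarrow> fps_polyfun G \<Longrightarrow> fps_polyfun (\<lambda>x. F x * G x)"
  unfolding fps_polyfun_def fps_mult_nth by (auto intro!: polyfun_sum polyfun.mult)

lemma fps_polyfun_sum: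
  "finite I \<Longrightarrow> (\<And>i. i \<in> I \<Longrightarrow> fps_polyfun (f i)) \<Longrightarrow> fps_polyfun (\<lambda>x. \<Sum>i\<in>I. f i x)"
  by (induction I rule: finite_induct) (auto intro: fps_polyfun_add fps_polyfun_const[of 0, simplified])

lemma fps_polyfun_prod:
  "finite I \<Longrightarrow> (\<And>i. i \<in> I \<Longrightarrow> fps_polyfun (f i)) \<Longrightarrow> fps_polyfun (\<lambda>x. \<Prod>i\<in>I. f i x)"
  by (induction I rule: finite_induct) (auto intro: fps_polyfun_mult fps_polyfun_const[of 1, simplified])

lemma fps_polyfun_det:
  assumes "\<And>i j. fps_polyfun (\<lambda>x. F x i j)"
  shows "fps_polyfun (\<lambda>x. det (mat m m (\<lambda>(i, j). F x i j)))"
proof -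
  have "det (mat m m (\<lambda>(i, j). F x i j)) =
    (\<Sum>p\<in>{p. p permutes {0..<m}}. signof p * (\<Prod>i\<in>{0..<m}. F x i (p i)))" for x
    by (subst det_def') (auto intro!: sum.cong prod.cong dest: permutes_in_image)
  then show ?thesis
    by (simp, intro fps_polyfun_sum fps_polyfun_mult fps_polyfun_const fps_polyfun_prod assms)
       (auto simp: finite_permutations)
qed

lemma coord_fps_arc_coords:
  "A \<in> carrier_mat r s \<Longrightarrow> i < r \<Longrightarrow> j < s \<Longrightarrow> coord_fps (arc_coords r s A) i j = A $$ (i, j)"
  unfolding coord_fps_def arc_coords_def by (auto intro: fps_ext)

lemma zariski_closure_subset: "S \<subseteq> arc_points r s \<Longrightarrow> S \<subseteq> zariski_closure r s S"
  unfolding zariski_closure_def by auto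

lemma zariski_closure_idem: "zariski_closure r s (zariski_closure r s S) \<subseteq> zariski_closure r s S"
  unfolding zariski_closure_def by auto

lemma zariski_closure_mono: "S \<subseteq> T \<Longrightarrow> zariski_closure r s S \<subseteq> zariski_closure r s T"
  unfolding zariski_closure_def by auto

text \<open>Polynomial functions are continuous, so the closure contains all coordinatewise limits.\<close>

lemma zariski_closure_limit:
  assumes A: "A \<in> arc_points r s" and F: "F \<noteq> bot"
    and ev: "eventually (\<lambda>n. B n \<in> S) F"
    and lim: "\<And>v. ((\<lambda>n. arc_coords r s (B n) v) \<longlongrightarrow> arc_coords r s A v) F"
  shows "A \<in> zariski_closure r s S"
  unfolding zariski_closure_def
proof (intro CollectI conjI ballI impI A)
  fix p assume p: "p \<in> polyfun" and van: "\<forall>B\<in>S. p (arc_coords r s B) = 0"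
  have "((\<lambda>n. p (arc_coords r s (B n))) \<longlongrightarrow> p (arc_coords r s A)) F"
    by (rule polyfun_tendsto[OF p lim])
  moreover have "((\<lambda>n. p (arc_coords r s (B n))) \<longlongrightarrow> 0) F"
    using ev van by (intro tendsto_eventually) (auto elim: eventually_mono)
  ultimately show "p (arc_coords r s A) = 0" using tendsto_unique[OF F] by blast
qed

lemma zariski_closure_punctured_line:
  assumes A: "A \<in> carrier_mat r s"
    and B: "\<And>c. c \<noteq> 0 \<Longrightarrow> B c \<in> S"
    and B_entries: "\<And>c i j. c \<noteq> 0 \<Longrightarrow> i < r \<Longrightarrow> j < s \<Longrightarrow> B c $$ (i, j) = A $$ (i, j) + fps_const c * E i j"
  shows "A \<in> zariski_closure r s S"
proof (rule zariski_closure_limit[where F = "at (0::complex)" and B = B])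
  show "A \<in> arc_points r s" using A unfolding arc_points_def by auto
  show "eventually (\<lambda>c. B c \<in> S) (at 0)"
    unfolding eventually_at using B by (auto intro: exI[of _ 1])
  fix v :: "nat \<times> nat \<times> nat"
  obtain i j k where v: "v = (i, j, k)" by (cases v)
  show "((\<lambda>c. arc_coords r s (B c) v) \<longlongrightarrow> arc_coords r s A v) (at 0)"
  proof (cases "i < r \<and> j < s")
    case True
    then have "eventually (\<lambda>c. arc_coords r s A v + c * fps_nth (E i j) k = arc_coords r s (B c) v) (at 0)"
      using B_entries unfolding v arc_coords_def eventually_at by (auto intro: exI[of _ 1])
    moreover have "((\<lambda>c. arc_coords r s A v + c * fps_nth (E i j) k)
        \<longlongrightarrow> arc_coords r s A v + 0 * fps_nth (E i j) k) (at 0)"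
      by (intro tendsto_intros)
    ultimately show ?thesis using tendsto_cong by fastforce
  next
    case False
    then show ?thesis unfolding v arc_coords_def by auto
  qed
qed simp

text \<open>The coordinates of g X h are polynomials in those of X, so vanishing polynomials pull back.\<close>

lemma zariski_closure_mult_invariant:
  assumes A: "A \<in> zariski_closure r s S" and S: "S \<subseteq> arc_points r s"
    and g: "g \<in> carrier_mat r r" and h: "h \<in> carrier_mat s s"
    and S_closed: "\<And>B. B \<in> S \<Longrightarrow> g * B * h \<in> S"
  shows "g * A * h \<in> zariski_closure r s S"
proof -
  define F where "F i j x = (\<Sum>b<s. (\<Sum>a<r. g $$ (i, a) * coord_fps x a b) * h $$ (b, j))" for i j x
  define \<sigma> where "\<sigma> = (\<lambda>(i, j, k). if i < r \<and> j < s then (\<lambda>x. fps_nth (F i j x) k) else (\<lambda>x. 0))"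
  have "fps_polyfun (F i j)" for i j
    unfolding F_def by (intro fps_polyfun_sum fps_polyfun_mult fps_polyfun_const fps_polyfun_coord) auto
  then have \<sigma>_polyfun: "\<sigma> v \<in> polyfun" for v
    using polyfun.const[of 0] unfolding \<sigma>_def fps_polyfun_def by (cases v) auto
  have \<sigma>_coords: "arc_coords r s (g * X * h) = (\<lambda>v. \<sigma> v (arc_coords r s X))" if X: "X \<in> carrier_mat r s" for X
  proof
    fix v
    have "(g * X * h) $$ (i, j) = F i j (arc_coords r s X)" if "i < r" "j < s" for i j
      using X g h that
      by (auto simp: F_def scalar_prod_def coord_fps_arc_coords lessThan_atLeast0 simp del: assoc_mult_mat
          intro!: sum.cong)
    then show "arc_coords r s (g * X * h) v = \<sigma> v (arc_coords r s X)"
      unfolding \<sigma>_def arc_coords_def by (cases v) auto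
  qed
  have A_carrier: "A \<in> carrier_mat r s" using A unfolding zariski_closure_def arc_points_def by auto
  show ?thesis unfolding zariski_closure_def
  proof (intro CollectI conjI ballI impI)
    show "g * A * h \<in> arc_points r s" using A_carrier g h unfolding arc_points_def by auto
    fix p assume p: "p \<in> polyfun" and van: "\<forall>B\<in>S. p (arc_coords r s B) = 0"
    have "(\<lambda>x. p (\<lambda>v. \<sigma> v x)) \<in> polyfun" by (rule polyfun_subst[OF p \<sigma>_polyfun])
    moreover have "p (\<lambda>v. \<sigma> v (arc_coords r s B)) = 0" if "B \<in> S" for B
      using that van S_closed[OF that] S \<sigma>_coords unfolding arc_points_def by (metis subsetD)
    ultimately have "p (\<lambda>v. \<sigma> v (arc_coords r s A)) = 0" using A unfolding zariski_closure_def by auto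
    then show "p (arc_coords r s (g * A * h)) = 0" using \<sigma>_coords[OF A_carrier] by simp
  qed
qed

section \<open>Orbits\<close>

lemma invertible_mat_iff_inverse:
  assumes "g \<in> carrier_mat n n"
  shows "invertible_mat g \<longleftrightarrow> (\<exists>G \<in> carrier_mat n n. g * G = 1\<^sub>m n \<and> G * g = 1\<^sub>m n)"
proof
  assume "invertible_mat g"
  then obtain G where G: "g * G = 1\<^sub>m n" "G * g = 1\<^sub>m (dim_row G)"
    using assms unfolding invertible_mat_def inverts_mat_def by auto
  moreover have "dim_col G = n" "dim_row G = n"
    using arg_cong[OF G(1), of dim_col] arg_cong[OF G(2), of dim_col] assms by auto
  ultimately show "\<exists>G \<in> carrier_mat n n. g * G = 1\<^sub>m n \<and> G * g = 1\<^sub>m n" by auto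
qed (use assms in \<open>auto simp: invertible_mat_def inverts_mat_def\<close>)

lemma invertible_mat_mult:
  assumes g: "g \<in> carrier_mat n n" "invertible_mat g" and g': "g' \<in> carrier_mat n n" "invertible_mat g'"
  shows "invertible_mat (g * g')"
proof -
  obtain G where G: "G \<in> carrier_mat n n" "g * G = 1\<^sub>m n" "G * g = 1\<^sub>m n"
    using g invertible_mat_iff_inverse by blast
  obtain G' where G': "G' \<in> carrier_mat n n" "g' * G' = 1\<^sub>m n" "G' * g' = 1\<^sub>m n"
    using g' invertible_mat_iff_inverse by blast
  have "g * g' * (G' * G) = g * (g' * G') * G"
    using g(1) g'(1) G(1) G'(1) by (simp add: assoc_mult_mat[of _ n n _ n _ n])
  also have "\<dots> = 1\<^sub>m n" using g G G' by simp
  finally have right: "g * g' * (G' * G) = 1\<^sub>m n" .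
  have "G' * G * (g * g') = G' * (G * g) * g'"
    using g(1) g'(1) G(1) G'(1) by (simp add: assoc_mult_mat[of _ n n _ n _ n])
  also have "\<dots> = 1\<^sub>m n" using g' G G' by simp
  finally have left: "G' * G * (g * g') = 1\<^sub>m n" .
  show ?thesis
    unfolding invertible_mat_iff_inverse[OF mult_carrier_mat[OF g(1) g'(1)]]
    using left right mult_carrier_mat[OF G'(1) G(1)] by blast
qed

lemma invertible_mat_one: "invertible_mat (1\<^sub>m n)"
  by (auto simp: invertible_mat_def inverts_mat_def intro!: exI[of _ "1\<^sub>m n"])

lemma arc_orbit_iff:
  "B \<in> arc_orbit r s A \<longleftrightarrow> (\<exists>g h. g \<in> carrier_mat r r \<and> invertible_mat g \<and>
     h \<in> carrier_mat s s \<and> invertible_mat h \<and> B = g * A * h)"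
  unfolding arc_orbit_def by (rule iffI; elim CollectE exE conjE)
    (use invertible_mat_iff_inverse in \<open>blast+\<close>)

lemma arc_orbit_subset: "A \<in> carrier_mat r s \<Longrightarrow> arc_orbit r s A \<subseteq> arc_points r s"
  unfolding arc_orbit_def arc_points_def by auto

lemma arc_orbit_refl: "A \<in> carrier_mat r s \<Longrightarrow> A \<in> arc_orbit r s A"
  unfolding arc_orbit_iff
  by (rule exI[of _ "1\<^sub>m r"], rule exI[of _ "1\<^sub>m s"]) (auto simp: invertible_mat_one)

lemma arc_orbit_mult:
  assumes A: "A \<in> carrier_mat r s" and B: "B \<in> arc_orbit r s A"
    and g: "g \<in> carrier_mat r r" "invertible_mat g" and h: "h \<in> carrier_mat s s" "invertible_mat h"
  shows "g * B * h \<in> arc_orbit r s A"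
proof -
  obtain g' h' where g': "g' \<in> carrier_mat r r" "invertible_mat g'"
    and h': "h' \<in> carrier_mat s s" "invertible_mat h'" and B_eq: "B = g' * A * h'"
    using B unfolding arc_orbit_iff by blast
  have "g * B * h = (g * g') * A * (h' * h)"
    unfolding B_eq using A g g' h h' by (simp add: assoc_mult_mat[of _ r r _ s _ s])
  then show ?thesis
    unfolding arc_orbit_iff using g g' h h' by (blast intro: invertible_mat_mult mult_carrier_mat)
qed

lemma arc_orbit_carrier: "A \<in> carrier_mat r s \<Longrightarrow> B \<in> arc_orbit r s A \<Longrightarrow> B \<in> carrier_mat r s"
  using arc_orbit_subset unfolding arc_points_def by blast

lemma arc_orbit_mult_left:
  assumes A: "A \<in> carrier_mat r s" and B: "B \<in> arc_orbit r s A"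
    and g: "g \<in> carrier_mat r r" "invertible_mat g"
  shows "g * B \<in> arc_orbit r s A"
  using arc_orbit_mult[OF A B g one_carrier_mat invertible_mat_one] g arc_orbit_carrier[OF A B] by simp

lemma arc_orbit_mult_right:
  assumes A: "A \<in> carrier_mat r s" and B: "B \<in> arc_orbit r s A"
    and h: "h \<in> carrier_mat s s" "invertible_mat h"
  shows "B * h \<in> arc_orbit r s A"
  using arc_orbit_mult[OF A B one_carrier_mat invertible_mat_one h] arc_orbit_carrier[OF A B] by simp

lemma invertible_addrow_mat:
  assumes "k < n" "l < n" "k \<noteq> l"
  shows "invertible_mat (addrow_mat n (e :: 'a :: comm_ring_1) k l)"
  unfolding invertible_mat_iff_inverse[OF addrow_mat_carrier]
  using addrow_mat_inv[OF assms, of e] addrow_mat_inv[OF assms, of "-e"] by force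

lemma invertible_swaprows_mat: "k < n \<Longrightarrow> l < n \<Longrightarrow> invertible_mat (swaprows_mat n k l)"
  unfolding invertible_mat_iff_inverse[OF swaprows_mat_carrier] using swaprows_mat_inv by force

lemma multrow_mat_inverse:
  assumes "a * b = 1"
  shows "multrow_mat n k (a :: 'a :: comm_ring_1) * multrow_mat n k b = 1\<^sub>m n"
proof -
  have "multrow_mat n k a * multrow_mat n k b = multrow k a (multrow_mat n k b)"
    by (rule multrow_mat[symmetric]) (rule multrow_mat_carrier)
  also have "\<dots> = 1\<^sub>m n" using assms by (intro eq_matI) auto
  finally show ?thesis .
qed

lemma invertible_multrow_mat:
  assumes "(a :: 'a :: comm_ring_1) dvd 1"
  shows "invertible_mat (multrow_mat n k a)"
proof -
  obtain b where "a * b = 1" "b * a = 1" using assms by (metis dvdE mult.commute)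
  then show ?thesis
    unfolding invertible_mat_iff_inverse[OF multrow_mat_carrier]
    using multrow_mat_inverse[of a b] multrow_mat_inverse[of b a] by force
qed

lemma arc_orbit_addrow:
  assumes A: "A \<in> carrier_mat r s" and B: "B \<in> arc_orbit r s A" and kl: "k < r" "l < r" "k \<noteq> l"
  shows "addrow e k l B \<in> arc_orbit r s A"
  using arc_orbit_mult_left[OF A B addrow_mat_carrier invertible_addrow_mat[OF kl]]
  by (simp add: addrow_mat[OF arc_orbit_carrier[OF A B] kl(2)])

lemma arc_orbit_addcol:
  assumes A: "A \<in> carrier_mat r s" and B: "B \<in> arc_orbit r s A" and kl: "k < s" "l < s" "k \<noteq> l"
  shows "addcol e l k B \<in> arc_orbit r s A"
  using arc_orbit_mult_right[OF A B addrow_mat_carrier invertible_addrow_mat[OF kl]]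
  by (simp add: addcol_mat[OF arc_orbit_carrier[OF A B] kl(1)])

lemma arc_orbit_swaprows:
  assumes A: "A \<in> carrier_mat r s" and B: "B \<in> arc_orbit r s A" and kl: "k < r" "l < r"
  shows "swaprows k l B \<in> arc_orbit r s A"
  using arc_orbit_mult_left[OF A B swaprows_mat_carrier invertible_swaprows_mat[OF kl]]
  by (simp add: swaprows_mat[OF arc_orbit_carrier[OF A B] kl])

lemma arc_orbit_multrow:
  assumes A: "A \<in> carrier_mat r s" and B: "B \<in> arc_orbit r s A" and a: "a dvd 1"
  shows "multrow k a B \<in> arc_orbit r s A"
  using arc_orbit_mult_left[OF A B multrow_mat_carrier invertible_multrow_mat[OF a]]
  by (simp add: multrow_mat[OF arc_orbit_carrier[OF A B]])

lemma zariski_closure_arc_orbit_mult: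
  assumes A: "A \<in> carrier_mat r s" and X: "X \<in> zariski_closure r s (arc_orbit r s A)"
    and g: "g \<in> carrier_mat r r" "invertible_mat g" and h: "h \<in> carrier_mat s s" "invertible_mat h"
  shows "g * X * h \<in> zariski_closure r s (arc_orbit r s A)"
  by (rule zariski_closure_mult_invariant[OF X arc_orbit_subset[OF A] g(1) h(1) arc_orbit_mult[OF A _ g h]])

lemma arc_orbit_subset_zariski_closure_iff:
  assumes A: "A \<in> carrier_mat r s" and D: "D \<in> carrier_mat r s"
  shows "arc_orbit r s D \<subseteq> zariski_closure r s (arc_orbit r s A) \<longleftrightarrow>
    D \<in> zariski_closure r s (arc_orbit r s A)"
proof
  assume D_closure: "D \<in> zariski_closure r s (arc_orbit r s A)"
  show "arc_orbit r s D \<subseteq> zariski_closure r s (arc_orbit r s A)"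
  proof
    fix B assume "B \<in> arc_orbit r s D"
    then obtain g h where "g \<in> carrier_mat r r" "invertible_mat g" "h \<in> carrier_mat s s" "invertible_mat h"
      and "B = g * D * h" unfolding arc_orbit_iff by blast
    then show "B \<in> zariski_closure r s (arc_orbit r s A)"
      using zariski_closure_arc_orbit_mult[OF A D_closure] by blast
  qed
qed (use arc_orbit_refl[OF D] in blast)

lemma zariski_closure_arc_orbit_trans:
  assumes A: "A \<in> carrier_mat r s" and D: "D \<in> carrier_mat r s"
    and "D \<in> zariski_closure r s (arc_orbit r s A)" and "E \<in> zariski_closure r s (arc_orbit r s D)"
  shows "E \<in> zariski_closure r s (arc_orbit r s A)"
proof -
  have "zariski_closure r s (arc_orbit r s D) \<subseteq> zariski_closure r s (zariski_closure r s (arc_orbit r s A))"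
    using assms(3) arc_orbit_subset_zariski_closure_iff[OF A D] by (intro zariski_closure_mono) blast
  then show ?thesis using assms(4) zariski_closure_idem by blast
qed

section \<open>Elementary degenerations of diagonal arcs\<close>

lemma delta_carrier[simp]: "delta r s \<nu> \<in> carrier_mat r s"
  and dim_delta[simp]: "dim_row (delta r s \<nu>) = r" "dim_col (delta r s \<nu>) = s"
  unfolding delta_def by simp_all

lemma delta_index:
  "i < r \<Longrightarrow> j < s \<Longrightarrow> delta r s \<nu> $$ (i, j) = (if j = s - r + i then tpow (\<nu> (i + 1)) else 0)"
  unfolding delta_def by simp

lemma delta_cong: "(\<And>i. 1 \<le> i \<Longrightarrow> i \<le> r \<Longrightarrow> \<nu> i = \<nu>' i) \<Longrightarrow> delta r s \<nu> = delta r s \<nu>'"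
  unfolding delta_def by (intro eq_matI) auto

lemma delta_in_zariski_closure_orbit: "delta r s \<nu> \<in> zariski_closure r s (arc_orbit r s (delta r s \<nu>))"
  using zariski_closure_subset[OF arc_orbit_subset[OF delta_carrier]] arc_orbit_refl[OF delta_carrier]
  by (rule subsetD)

lemma delta_increase_in_zariski_closure:
  assumes p: "1 \<le> p" "p \<le> r"
  shows "delta r s (\<nu>(p := \<nu> p + 1)) \<in> zariski_closure r s (arc_orbit r s (delta r s \<nu>))"
proof (cases "\<nu> p")
  case infinity
  then show ?thesis using delta_in_zariski_closure_orbit by (simp add: fun_upd_idem)
next
  case (enat n)
  let ?D = "delta r s \<nu>"
  show ?thesis
  proof (rule zariski_closure_punctured_line[where B = "\<lambda>c. multrow (p - 1) (fps_const c + fps_X) ?D"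
        and E = "\<lambda>i j. if i = p - 1 then ?D $$ (i, j) else 0"])
    fix c :: complex assume c: "c \<noteq> 0"
    then show "multrow (p - 1) (fps_const c + fps_X) ?D \<in> arc_orbit r s ?D"
      using p by (intro arc_orbit_multrow arc_orbit_refl) auto
    fix i j assume "i < r" "j < s"
    then show "multrow (p - 1) (fps_const c + fps_X) ?D $$ (i, j) =
      delta r s (\<nu>(p := \<nu> p + 1)) $$ (i, j) + fps_const c * (if i = p - 1 then ?D $$ (i, j) else 0)"
      using p enat by (cases "i = p - 1") (auto simp: delta_index tpow_def one_enat_def distrib_right)
  qed simp
qed

lemma delta_transfer_in_zariski_closure:
  assumes kj: "1 \<le> k" "k < j" "j \<le> r" and rs: "r \<le> s"
    and \<nu>k: "\<nu> k = enat (Suc a)" and \<nu>j: "\<nu> j = enat b" and ba: "b \<le> a"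
  shows "delta r s (\<nu>(k := enat a, j := enat (Suc b))) \<in> zariski_closure r s (arc_orbit r s (delta r s \<nu>))"
proof -
  define k0 j0 where "k0 = k - 1" and "j0 = j - 1"
  define ck cj where "ck = s - r + k0" and "cj = s - r + j0"
  have idx: "k0 < r" "j0 < r" "k0 \<noteq> j0" "ck < s" "cj < s" "ck \<noteq> cj" "k0 + 1 = k" "j0 + 1 = j"
    using kj rs unfolding k0_def j0_def ck_def cj_def by auto
  let ?D = "delta r s \<nu>"
  txt \<open>On rows k0, j0 and columns ck, cj: swap and rescale the rows of diag(t^(a+1), t^b) to
    [[0, c t^b], [-t^(a+1)/c, 0]], add t/c times row k0 to row j0, and t^(a-b)/c times column cj
    to column ck, reaching [[t^a, c t^b], [0, t^(b+1)]].\<close>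
  define B where "B c = addcol (fps_X ^ (a - b) * fps_const (1 / c)) ck cj
    (addrow (fps_X * fps_const (1 / c)) j0 k0
      (multrow j0 (- fps_const (1 / c)) (multrow k0 (fps_const c) (swaprows k0 j0 ?D))))" for c
  show ?thesis
  proof (rule zariski_closure_punctured_line[where B = B
        and E = "\<lambda>i l. if i = k0 \<and> l = cj then fps_X ^ b else 0"])
    fix c :: complex assume c: "c \<noteq> 0"
    have units: "fps_const c dvd 1" "- fps_const (1 / c) dvd 1" using c by simp_all
    note orbit_ops = arc_orbit_addcol[OF delta_carrier] arc_orbit_addrow[OF delta_carrier]
      arc_orbit_multrow[OF delta_carrier] arc_orbit_swaprows[OF delta_carrier]
    show "B c \<in> arc_orbit r s ?D"
      unfolding B_def using idx units
      by (intro orbit_ops arc_orbit_refl[OF delta_carrier]) simp_all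
    define u v where "u = fps_const c" and "v = fps_const (1 / c)"
    have vu: "v * u = 1" using c unfolding u_def v_def by simp
    have "fps_X ^ (a - b) * (v * (u * fps_X ^ b)) = (v * u) * (fps_X ^ (a - b) * fps_X ^ b)"
      by (simp only: ac_simps)
    also have "\<dots> = fps_X ^ a" using ba vu by (simp flip: power_add)
    finally have cancel: "fps_X ^ (a - b) * (v * (u * fps_X ^ b)) = fps_X ^ a" .
    fix i l assume "i < r" "l < s"
    then show "B c $$ (i, l) = delta r s (\<nu>(k := enat a, j := enat (Suc b))) $$ (i, l) +
      fps_const c * (if i = k0 \<and> l = cj then fps_X ^ b else 0)"
      unfolding B_def u_def[symmetric] v_def[symmetric] using idx \<nu>k \<nu>j
      by (auto simp: delta_index tpow_def ck_def cj_def vu cancel mult.assoc)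
  qed simp
qed

section \<open>Co-dominance is generated by elementary moves\<close>

definition tail_sum :: "nat \<Rightarrow> (nat \<Rightarrow> nat) \<Rightarrow> nat \<Rightarrow> nat" where
  "tail_sum r x i = (\<Sum>k = i..r. x k)"

definition codom_le :: "nat \<Rightarrow> nat \<Rightarrow> (nat \<Rightarrow> nat) \<Rightarrow> (nat \<Rightarrow> nat) \<Rightarrow> bool" where
  "codom_le q r x y \<longleftrightarrow> (\<forall>i\<in>{q<..r}. tail_sum r x i \<le> tail_sum r y i)"

inductive codom_move :: "nat \<Rightarrow> nat \<Rightarrow> (nat \<Rightarrow> nat) \<Rightarrow> (nat \<Rightarrow> nat) \<Rightarrow> bool" for q r where
  increase: "p \<in> {q<..r} \<Longrightarrow> codom_move q r x (x(p := Suc (x p)))"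
| transfer: "q < k \<Longrightarrow> k < j \<Longrightarrow> j \<le> r \<Longrightarrow> x j < x k \<Longrightarrow>
    codom_move q r x (x(k := x k - 1, j := Suc (x j)))"

lemma tail_sum_Suc: "i \<le> r \<Longrightarrow> tail_sum r x i = x i + tail_sum r x (Suc i)"
  unfolding tail_sum_def by (simp add: sum.atLeast_Suc_atMost)

lemma tail_sum_beyond: "r < i \<Longrightarrow> tail_sum r x i = 0"
  unfolding tail_sum_def by simp

lemma tail_sum_update_inside:
  assumes "i \<le> p" "p \<le> r"
  shows "tail_sum r (x(p := v)) i + x p = tail_sum r x i + v"
proof -
  have p: "p \<in> {i..r}" using assms by simp
  have "(\<Sum>k\<in>{i..r} - {p}. (x(p := v)) k) = (\<Sum>k\<in>{i..r} - {p}. x k)" by (rule sum.cong) auto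
  then show ?thesis unfolding tail_sum_def by (simp add: sum.remove[OF _ p])
qed

lemma tail_sum_update_outside: "p < i \<or> r < p \<Longrightarrow> tail_sum r (x(p := v)) i = tail_sum r x i"
  unfolding tail_sum_def by (intro sum.cong) auto

lemma tail_sum_eq_imp_eq:
  assumes "i \<le> r" "tail_sum r x i = tail_sum r y i" "tail_sum r x (Suc i) = tail_sum r y (Suc i)"
  shows "x i = y i"
  using assms tail_sum_Suc[OF assms(1), of x] tail_sum_Suc[OF assms(1), of y] by simp

lemma codom_le_top_index:
  assumes a: "antimono_on {q<..r} a" and le: "codom_le q r a b" and ne: "\<exists>i\<in>{q<..r}. a i \<noteq> b i"
  obtains i0 where "q < i0" "i0 \<le> r" "tail_sum r a i0 < tail_sum r b i0" "a i0 < b i0"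
    "\<And>i. i0 < i \<Longrightarrow> tail_sum r a i = tail_sum r b i" "\<And>i. i0 < i \<Longrightarrow> i \<le> r \<Longrightarrow> b i < b i0"
proof -
  define I where "I = {i\<in>{q<..r}. tail_sum r a i < tail_sum r b i}"
  have tail_eq: "tail_sum r a i = tail_sum r b i" if "q < i" "i \<notin> I" for i
  proof (cases "i \<le> r")
    case True
    then have "tail_sum r a i \<le> tail_sum r b i" using le that(1) unfolding codom_le_def by simp
    moreover have "\<not> tail_sum r a i < tail_sum r b i" using that True unfolding I_def by simp
    ultimately show ?thesis by simp
  qed (simp add: tail_sum_beyond)
  have "I \<noteq> {}"
  proof
    assume "I = {}"
    then have "a i = b i" if "q < i" "i \<le> r" for i
      using that tail_eq[of i] tail_eq[of "Suc i"] by (intro tail_sum_eq_imp_eq[where x = a and y = b]) simp_all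
    then show False using ne by auto
  qed
  moreover have "finite I" unfolding I_def by simp
  ultimately have i0: "Max I \<in> I" and above: "\<And>i. i \<in> I \<Longrightarrow> i \<le> Max I" by simp_all
  define i0 where "i0 = Max I"
  have i0_range: "q < i0" "i0 \<le> r" and i0_strict: "tail_sum r a i0 < tail_sum r b i0"
    using i0 unfolding i0_def I_def by auto
  have eq_above: "tail_sum r a i = tail_sum r b i" if "i0 < i" for i
    using that i0_range above[of i] unfolding i0_def by (intro tail_eq) auto
  have a_eq_b: "a i = b i" if "i0 < i" "i \<le> r" for i
    using that eq_above[of i] eq_above[of "Suc i"] by (intro tail_sum_eq_imp_eq[where x = a and y = b]) simp_all
  have "a i0 < b i0"
    using i0_strict eq_above[of "Suc i0"] tail_sum_Suc[OF i0_range(2), of a] tail_sum_Suc[OF i0_range(2), of b]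
    by simp
  moreover have "b i < b i0" if "i0 < i" "i \<le> r" for i
  proof -
    have "a i \<le> a i0" using that i0_range by (intro monotone_onD[OF a]) auto
    then show ?thesis using a_eq_b[OF that] \<open>a i0 < b i0\<close> by simp
  qed
  ultimately show thesis using that[OF i0_range i0_strict] eq_above by blast
qed

lemma codom_le_undo_increase:
  assumes b: "antimono_on {q<..r} b" and i0: "q < i0" "i0 \<le> r" "0 < b i0"
    and top: "\<And>i. i0 < i \<Longrightarrow> i \<le> r \<Longrightarrow> b i < b i0"
    and le: "codom_le q r a b" and strict: "\<And>i. q < i \<Longrightarrow> i \<le> i0 \<Longrightarrow> tail_sum r a i < tail_sum r b i"
  defines "b' \<equiv> b(i0 := b i0 - 1)"
  shows "antimono_on {q<..r} b'" "codom_le q r a b'" "codom_move q r b' b"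
    and "\<And>i. tail_sum r b' i \<le> tail_sum r b i" "tail_sum r b' i0 < tail_sum r b i0"
proof -
  have tail: "tail_sum r b' i = (if i \<le> i0 then tail_sum r b i - 1 else tail_sum r b i)" for i
    using tail_sum_update_inside[of i i0 r b "b i0 - 1"] tail_sum_update_outside[of i0 i r b "b i0 - 1"] i0
    unfolding b'_def by auto
  show "antimono_on {q<..r} b'"
  proof (rule monotone_onI)
    fix x y assume xy: "x \<in> {q<..r}" "y \<in> {q<..r}" "x \<le> y"
    then show "b' y \<le> b' x"
      using top[of y] monotone_onD[OF b, of x y] monotone_onD[OF b, of x i0] i0 unfolding b'_def
      by (cases "x = i0"; cases "y = i0") auto
  qed
  show "codom_le q r a b'"
    unfolding codom_le_def
  proof
    fix i assume "i \<in> {q<..r}"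
    then show "tail_sum r a i \<le> tail_sum r b' i"
      using le strict[of i] unfolding codom_le_def tail by auto
  qed
  have "b'(i0 := Suc (b' i0)) = b" using i0 unfolding b'_def by auto
  then show "codom_move q r b' b" using codom_move.increase[of i0 q r b'] i0 by simp
  show "\<And>i. tail_sum r b' i \<le> tail_sum r b i" "tail_sum r b' i0 < tail_sum r b i0"
    using strict[of i0] i0 unfolding tail by auto
qed

lemma codom_le_undo_transfer:
  assumes b: "antimono_on {q<..r} b" and i: "q < i1" "i1 < i0" "i0 \<le> r" "0 < b i0"
    and top: "\<And>i. i0 < i \<Longrightarrow> i \<le> r \<Longrightarrow> b i < b i0"
    and bottom: "\<And>i. q < i \<Longrightarrow> i < i1 \<Longrightarrow> b i1 < b i"
    and le: "codom_le q r a b" and strict: "\<And>i. i1 < i \<Longrightarrow> i \<le> i0 \<Longrightarrow> tail_sum r a i < tail_sum r b i"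
  defines "b' \<equiv> b(i1 := Suc (b i1), i0 := b i0 - 1)"
  shows "antimono_on {q<..r} b'" "codom_le q r a b'" "codom_move q r b' b"
    and "\<And>i. tail_sum r b' i \<le> tail_sum r b i" "tail_sum r b' i0 < tail_sum r b i0"
proof -
  define b1 where "b1 = b(i1 := Suc (b i1))"
  have b': "b' = b1(i0 := b i0 - 1)" "b1 i0 = b i0" unfolding b'_def b1_def using i by auto
  have tail1: "tail_sum r b1 i = (if i \<le> i1 then Suc (tail_sum r b i) else tail_sum r b i)" for i
    using tail_sum_update_inside[of i i1 r b "Suc (b i1)"] tail_sum_update_outside[of i1 i r b "Suc (b i1)"] i
    unfolding b1_def by auto
  have tail: "tail_sum r b' i =
      (if i \<le> i1 then tail_sum r b i else if i \<le> i0 then tail_sum r b i - 1 else tail_sum r b i)" for i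
    using tail_sum_update_inside[of i i0 r b1 "b i0 - 1"] tail_sum_update_outside[of i0 i r b1 "b i0 - 1"] i
    unfolding b' tail1 by (auto split: if_splits)
  have "b i0 \<le> b i1" using i by (intro monotone_onD[OF b]) auto
  show "antimono_on {q<..r} b'"
  proof (rule monotone_onI)
    fix x y assume xy: "x \<in> {q<..r}" "y \<in> {q<..r}" "x \<le> y"
    then show "b' y \<le> b' x"
      using top[of y] bottom[of x] monotone_onD[OF b, of x y] monotone_onD[OF b, of x i0]
        monotone_onD[OF b, of i1 y] \<open>b i0 \<le> b i1\<close> i
      unfolding b'_def
      by (cases "x = i1"; cases "x = i0"; cases "y = i1"; cases "y = i0") auto
  qed
  show "codom_le q r a b'"
    unfolding codom_le_def
  proof
    fix i assume "i \<in> {q<..r}"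
    then show "tail_sum r a i \<le> tail_sum r b' i"
      using le strict[of i] unfolding codom_le_def tail by auto
  qed
  have "b'(i1 := b' i1 - 1, i0 := Suc (b' i0)) = b" "b' i0 < b' i1"
    using i \<open>b i0 \<le> b i1\<close> unfolding b'_def by auto
  then show "codom_move q r b' b" using codom_move.transfer[of q i1 i0 r b'] i by simp
  show "\<And>i. tail_sum r b' i \<le> tail_sum r b i" "tail_sum r b' i0 < tail_sum r b i0"
    using strict[of i0] i unfolding tail by auto
qed

lemma codom_le_tight_index:
  assumes a: "antimono_on {q<..r} a" and b: "antimono_on {q<..r} b" and le: "codom_le q r a b"
    and i1: "q < i1" "i1 \<le> r" "tail_sum r a i1 = tail_sum r b i1"
    and strict: "tail_sum r a (Suc i1) < tail_sum r b (Suc i1)"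
    and i: "q < i" "i < i1"
  shows "b i1 < b i"
proof -
  define p where "p = i1 - 1"
  have p: "q < p" "i \<le> p" "Suc p = i1" using i unfolding p_def by auto
  have "b i1 < a i1" using strict i1 tail_sum_Suc[of i1 r a] tail_sum_Suc[of i1 r b] by simp
  moreover have "a p + tail_sum r a i1 \<le> b p + tail_sum r b i1"
    using le p i1 tail_sum_Suc[of p r a] tail_sum_Suc[of p r b] unfolding codom_le_def by force
  moreover have "a i1 \<le> a p" "b p \<le> b i"
    using p i1 i by (auto intro!: monotone_onD[OF a] monotone_onD[OF b])
  ultimately show ?thesis using i1 by simp
qed

text \<open>Descending from b: lower b by one at the last index i0 where the tail sums differ. If some
  tail sum below i0 is tight, add the unit back at the last tight index i1 instead, which undoes a
  transfer from i1 to i0.\<close>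

lemma codom_le_step:
  assumes a: "antimono_on {q<..r} a" and b: "antimono_on {q<..r} b"
    and le: "codom_le q r a b" and ne: "\<exists>i\<in>{q<..r}. a i \<noteq> b i"
  obtains b' where "antimono_on {q<..r} b'" "codom_le q r a b'" "codom_move q r b' b"
    "(\<Sum>i\<in>{q<..r}. tail_sum r b' i) < (\<Sum>i\<in>{q<..r}. tail_sum r b i)"
proof -
  obtain i0 where i0: "q < i0" "i0 \<le> r" "tail_sum r a i0 < tail_sum r b i0" "a i0 < b i0"
    and eq_above: "\<And>i. i0 < i \<Longrightarrow> tail_sum r a i = tail_sum r b i"
    and top: "\<And>i. i0 < i \<Longrightarrow> i \<le> r \<Longrightarrow> b i < b i0"
    using codom_le_top_index[OF a le ne] by metis
  have measure_less: "(\<Sum>i\<in>{q<..r}. tail_sum r b' i) < (\<Sum>i\<in>{q<..r}. tail_sum r b i)"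
    if "\<And>i. tail_sum r b' i \<le> tail_sum r b i" "tail_sum r b' i0 < tail_sum r b i0" for b'
    using that i0 by (auto intro!: sum_strict_mono_ex1)
  define J where "J = {i\<in>{q<..<i0}. tail_sum r a i = tail_sum r b i}"
  have le_i: "tail_sum r a i \<le> tail_sum r b i" if "q < i" "i \<le> r" for i
    using le that unfolding codom_le_def by simp
  show thesis
  proof (cases "J = {}")
    case True
    have "tail_sum r a i < tail_sum r b i" if "q < i" "i \<le> i0" for i
    proof (cases "i = i0")
      case False
      then have "tail_sum r a i \<noteq> tail_sum r b i" using True that unfolding J_def by auto
      then show ?thesis using le_i[of i] that i0 by simp
    qed (use i0 in simp)
    note step = codom_le_undo_increase[OF b i0(1,2) _ top le this]
    show thesis
      using that[OF step(1-3) measure_less[OF step(4-5)]] i0(4) by simp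
  next
    case False
    define i1 where "i1 = Max J"
    have "finite J" unfolding J_def by simp
    then have i1: "q < i1" "i1 < i0" "tail_sum r a i1 = tail_sum r b i1" and below: "\<And>i. i \<in> J \<Longrightarrow> i \<le> i1"
      using Max_in[OF _ False] unfolding i1_def J_def by auto
    have strict: "tail_sum r a i < tail_sum r b i" if "i1 < i" "i \<le> i0" for i
    proof (cases "i = i0")
      case False
      then have "tail_sum r a i \<noteq> tail_sum r b i" using below[of i] that i1 unfolding J_def by auto
      then show ?thesis using le_i[of i] that i1 i0 by simp
    qed (use i0 in simp)
    have "b i1 < b i" if "q < i" "i < i1" for i
      using codom_le_tight_index[OF a b le i1(1) _ i1(3) strict[of "Suc i1"] that] i1 i0 by simp
    note step = codom_le_undo_transfer[OF b i1(1,2) i0(2) _ top this le strict]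
    show thesis
      using that[OF step(1-3) measure_less[OF step(4-5)]] i0(4) by simp
  qed
qed

lemma codom_le_induct:
  assumes a: "antimono_on {q<..r} a" and b: "antimono_on {q<..r} b" and le: "codom_le q r a b"
    and eq: "\<And>x y. (\<And>i. q < i \<Longrightarrow> i \<le> r \<Longrightarrow> x i = y i) \<Longrightarrow> P x y"
    and trans: "\<And>x y z. P x y \<Longrightarrow> P y z \<Longrightarrow> P x z"
    and move: "\<And>x y. codom_move q r x y \<Longrightarrow> P x y"
  shows "P a b"
  using b le
proof (induction "\<Sum>i\<in>{q<..r}. tail_sum r b i" arbitrary: b rule: less_induct)
  case (less b)
  show ?case
  proof (cases "\<exists>i\<in>{q<..r}. a i \<noteq> b i")
    case True
    then obtain b' where b': "antimono_on {q<..r} b'" "codom_le q r a b'" "codom_move q r b' b"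
      and smaller: "(\<Sum>i\<in>{q<..r}. tail_sum r b' i) < (\<Sum>i\<in>{q<..r}. tail_sum r b i)"
      using codom_le_step[OF a less.prems] by blast
    show ?thesis by (rule trans[OF less.hyps[OF smaller b'(1,2)] move[OF b'(3)]])
  qed (rule eq, auto)
qed

section \<open>Sufficiency of co-domination\<close>

definition inf_prefix :: "nat \<Rightarrow> (nat \<Rightarrow> nat) \<Rightarrow> nat \<Rightarrow> enat" where
  "inf_prefix q x i = (if i \<le> q then \<infinity> else enat (x i))"

lemma delta_inf_prefix_in_zariski_closure:
  assumes rs: "r \<le> s" and a: "antimono_on {q<..r} a" and b: "antimono_on {q<..r} b"
    and le: "codom_le q r a b"
  shows "delta r s (inf_prefix q b) \<in> zariski_closure r s (arc_orbit r s (delta r s (inf_prefix q a)))"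
proof (rule codom_le_induct[OF a b le, where P =
    "\<lambda>x y. delta r s (inf_prefix q y) \<in> zariski_closure r s (arc_orbit r s (delta r s (inf_prefix q x)))"])
  fix x y :: "nat \<Rightarrow> nat" assume "\<And>i. q < i \<Longrightarrow> i \<le> r \<Longrightarrow> x i = y i"
  then have "delta r s (inf_prefix q y) = delta r s (inf_prefix q x)"
    by (intro delta_cong) (auto simp: inf_prefix_def)
  then show "delta r s (inf_prefix q y) \<in> zariski_closure r s (arc_orbit r s (delta r s (inf_prefix q x)))"
    using delta_in_zariski_closure_orbit by simp
next
  fix x y z :: "nat \<Rightarrow> nat"
  assume "delta r s (inf_prefix q y) \<in> zariski_closure r s (arc_orbit r s (delta r s (inf_prefix q x)))"
    and "delta r s (inf_prefix q z) \<in> zariski_closure r s (arc_orbit r s (delta r s (inf_prefix q y)))"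
  then show "delta r s (inf_prefix q z) \<in> zariski_closure r s (arc_orbit r s (delta r s (inf_prefix q x)))"
    by (rule zariski_closure_arc_orbit_trans[OF delta_carrier delta_carrier])
next
  fix x y :: "nat \<Rightarrow> nat" assume "codom_move q r x y"
  then show "delta r s (inf_prefix q y) \<in> zariski_closure r s (arc_orbit r s (delta r s (inf_prefix q x)))"
  proof cases
    case (increase p)
    then have "inf_prefix q y = (inf_prefix q x)(p := inf_prefix q x p + 1)"
      by (auto simp: inf_prefix_def one_enat_def)
    then show ?thesis using increase delta_increase_in_zariski_closure[of p r s "inf_prefix q x"] by simp
  next
    case (transfer k j)
    then have "inf_prefix q y = (inf_prefix q x)(k := enat (x k - 1), j := enat (Suc (x j)))"
      and "inf_prefix q x k = enat (Suc (x k - 1))" "inf_prefix q x j = enat (x j)"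
      by (auto simp: inf_prefix_def)
    then show ?thesis
      using transfer rs delta_transfer_in_zariski_closure[of k j r s "inf_prefix q x" "x k - 1" "x j"] by simp
  qed
qed

lemma nth_tpow_min: "k < N \<Longrightarrow> fps_nth (tpow (min e (enat N))) k = fps_nth (tpow e) k"
  by (cases e) (auto simp: tpow_def min_def)

lemma delta_in_zariski_closure_limit:
  assumes approx: "\<And>N. N0 \<le> N \<Longrightarrow> delta r s (\<nu> N) \<in> zariski_closure r s S"
    and coeff: "\<And>i k. 1 \<le> i \<Longrightarrow> i \<le> r \<Longrightarrow>
      eventually (\<lambda>N. fps_nth (tpow (\<nu> N i)) k = fps_nth (tpow (\<mu> i)) k) sequentially"
  shows "delta r s \<mu> \<in> zariski_closure r s S"
proof -
  have "delta r s \<mu> \<in> zariski_closure r s (zariski_closure r s S)"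
  proof (rule zariski_closure_limit[where F = sequentially and B = "\<lambda>N. delta r s (\<nu> N)"])
    show "delta r s \<mu> \<in> arc_points r s" unfolding arc_points_def by simp
    show "eventually (\<lambda>N. delta r s (\<nu> N) \<in> zariski_closure r s S) sequentially"
      using approx unfolding eventually_sequentially by blast
    fix v :: "nat \<times> nat \<times> nat"
    obtain i j k where v: "v = (i, j, k)" by (cases v)
    have "eventually (\<lambda>N. arc_coords r s (delta r s (\<nu> N)) v = arc_coords r s (delta r s \<mu>) v) sequentially"
    proof (cases "i < r \<and> j < s \<and> j = s - r + i")
      case True
      then show ?thesis using coeff[of "i + 1" k]
        unfolding v arc_coords_def by (auto simp: delta_index elim: eventually_mono)
    qed (auto simp: v arc_coords_def delta_index)
    then show "((\<lambda>N. arc_coords r s (delta r s (\<nu> N)) v) \<longlongrightarrow> arc_coords r s (delta r s \<mu>) v) sequentially"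
      by (rule tendsto_eventually)
  qed simp
  then show ?thesis using zariski_closure_idem by blast
qed

lemma sum_enat: "(\<Sum>k\<in>A. enat (f k)) = enat (\<Sum>k\<in>A. f k)"
  by (induction A rule: infinite_finite_induct) (auto simp: zero_enat_def)

lemma sum_eq_infinity_iff: "finite A \<Longrightarrow> (\<Sum>k\<in>A. g k) = (\<infinity>::enat) \<longleftrightarrow> (\<exists>k\<in>A. g k = \<infinity>)"
  by (induction A rule: finite_induct) (auto simp: plus_eq_infty_iff_enat)

lemma enat_the_enat_min: "enat (the_enat (min e (enat N))) = min e (enat N)"
  by (cases e) auto

lemma antimono_infinite_prefix:
  fixes lam :: "nat \<Rightarrow> enat"
  assumes "antimono_on {1..r} lam"
  obtains q where "q \<le> r" "\<And>i. 1 \<le> i \<Longrightarrow> i \<le> r \<Longrightarrow> lam i = \<infinity> \<longleftrightarrow> i \<le> q"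
proof -
  define q where "q = Max (insert 0 {i\<in>{1..r}. lam i = \<infinity>})"
  have fin: "finite (insert 0 {i\<in>{1..r}. lam i = \<infinity>})" by simp
  have "q \<le> r" unfolding q_def using fin by (subst Max_le_iff) auto
  moreover have "lam i = \<infinity> \<longleftrightarrow> i \<le> q" if "1 \<le> i" "i \<le> r" for i
  proof
    assume "lam i = \<infinity>"
    then show "i \<le> q" unfolding q_def using that fin by (intro Max_ge) auto
  next
    assume "i \<le> q"
    then have "q \<in> {i\<in>{1..r}. lam i = \<infinity>}"
      using Max_in[OF fin] that unfolding q_def by auto
    then have "lam q \<le> lam i" using that \<open>i \<le> q\<close> by (intro monotone_onD[OF assms]) auto
    then show "lam i = \<infinity>" using \<open>q \<in> _\<close> by simp
  qed
  ultimately show thesis by (rule that)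
qed

lemma codom_le_truncation:
  fixes lam mu :: "nat \<Rightarrow> enat"
  assumes fin: "\<And>i. q < i \<Longrightarrow> i \<le> r \<Longrightarrow> lam i = enat (a i)"
    and le: "\<And>i. q < i \<Longrightarrow> i \<le> r \<Longrightarrow> (\<Sum>k = i..r. lam k) \<le> (\<Sum>k = i..r. mu k)"
    and N: "tail_sum r a (Suc q) \<le> N"
  shows "codom_le q r a (\<lambda>i. the_enat (min (mu i) (enat N)))"
  unfolding codom_le_def
proof
  fix i assume i: "i \<in> {q<..r}"
  let ?b = "\<lambda>i. the_enat (min (mu i) (enat N))"
  show "tail_sum r a i \<le> tail_sum r ?b i"
  proof (cases "\<exists>k\<in>{i..r}. enat N \<le> mu k")
    case True
    then obtain k where k: "k \<in> {i..r}" "enat N \<le> mu k" by blast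
    have "tail_sum r a i \<le> tail_sum r a (Suc q)" unfolding tail_sum_def using i by (intro sum_mono2) auto
    also have "\<dots> \<le> ?b k" using N k by (simp add: min_def)
    also have "\<dots> \<le> tail_sum r ?b i" unfolding tail_sum_def using k by (intro member_le_sum) auto
    finally show ?thesis .
  next
    case False
    have "mu k = enat (?b k)" if "k \<in> {i..r}" for k
    proof -
      have "mu k < enat N" using False that by (auto simp: not_le)
      then show ?thesis by (cases "mu k") (auto simp: min_def)
    qed
    then have "enat (tail_sum r ?b i) = (\<Sum>k = i..r. mu k)" unfolding tail_sum_def sum_enat[symmetric]
      by (intro sum.cong) auto
    moreover have "enat (tail_sum r a i) = (\<Sum>k = i..r. lam k)" unfolding tail_sum_def sum_enat[symmetric]
      using fin i by (intro sum.cong) auto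
    ultimately show ?thesis using le[of i] i by (metis enat_ord_simps(1) greaterThanAtMost_iff)
  qed
qed

lemma codom_infinite_parts:
  fixes lam mu :: "nat \<Rightarrow> enat"
  assumes mu_anti: "antimono_on {1..r} mu"
    and le: "\<And>i. 1 \<le> i \<Longrightarrow> i \<le> r \<Longrightarrow> (\<Sum>k = i..r. lam k) \<le> (\<Sum>k = i..r. mu k)"
    and q: "lam q = \<infinity>" "q \<le> r" and i: "1 \<le> i" "i \<le> q"
  shows "mu i = \<infinity>"
proof -
  have "(\<Sum>k = q..r. lam k) = \<infinity>" using q by (subst sum_eq_infinity_iff) auto
  then have "(\<Sum>k = q..r. mu k) = \<infinity>" using le[of q] q i by (simp add: top_unique[symmetric])
  then obtain k where "k \<in> {q..r}" "mu k = \<infinity>" using sum_eq_infinity_iff[of "{q..r}" mu] by auto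
  moreover have "mu k \<le> mu i" using calculation(1) q i by (intro monotone_onD[OF mu_anti]) auto
  ultimately show ?thesis by simp
qed

lemma antimono_on_the_enat:
  assumes "antimono_on A f" "\<And>i. i \<in> A \<Longrightarrow> f i = enat (g i)"
  shows "antimono_on A g"
  using assms by (intro monotone_onI) (metis enat_ord_simps(1) monotone_onD)

lemma delta_in_zariski_closure_if_codom:
  assumes rs: "r \<le> s" and lam_anti: "antimono_on {1..r} lam" and mu_anti: "antimono_on {1..r} mu"
    and le: "\<And>i. 1 \<le> i \<Longrightarrow> i \<le> r \<Longrightarrow> (\<Sum>k = i..r. lam k) \<le> (\<Sum>k = i..r. mu k)"
  shows "delta r s mu \<in> zariski_closure r s (arc_orbit r s (delta r s lam))"
proof -
  txt \<open>The first q parts of \<lambda> and \<mu> are infinite; the moves act on the remaining ones, and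
    \<mu> is the limit of its truncations at N.\<close>
  obtain q where q: "q \<le> r" "\<And>i. 1 \<le> i \<Longrightarrow> i \<le> r \<Longrightarrow> lam i = \<infinity> \<longleftrightarrow> i \<le> q"
    using antimono_infinite_prefix[OF lam_anti] by blast
  have mu_inf: "mu i = \<infinity>" if "1 \<le> i" "i \<le> q" for i
    using codom_infinite_parts[OF mu_anti le _ q(1) that] q that by simp
  define a where "a i = the_enat (lam i)" for i
  define b where "b N = (\<lambda>i. the_enat (min (mu i) (enat N)))" for N
  have a_fin: "lam i = enat (a i)" if "q < i" "i \<le> r" for i
    using q(2)[of i] that unfolding a_def by (cases "lam i") auto
  have a_anti: "antimono_on {q<..r} a"
    using a_fin by (intro antimono_on_the_enat[OF monotone_on_subset[OF lam_anti]]) auto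
  have "antimono_on {q<..r} (\<lambda>i. min (mu i) (enat N))" for N
    using monotone_onD[OF mu_anti] by (intro monotone_onI min.mono) auto
  then have b_anti: "antimono_on {q<..r} (b N)" for N
    unfolding b_def by (rule antimono_on_the_enat) (simp add: enat_the_enat_min)
  have lam_eq: "delta r s lam = delta r s (inf_prefix q a)"
    using q a_fin by (intro delta_cong) (auto simp: inf_prefix_def)
  have approx: "delta r s (inf_prefix q (b N)) \<in> zariski_closure r s (arc_orbit r s (delta r s lam))"
    if "tail_sum r a (Suc q) \<le> N" for N
  proof -
    have "codom_le q r a (b N)"
      unfolding b_def by (rule codom_le_truncation[where lam = lam]) (fact a_fin, simp add: le, fact that)
    then show ?thesis unfolding lam_eq by (rule delta_inf_prefix_in_zariski_closure[OF rs a_anti b_anti])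
  qed
  show ?thesis
  proof (rule delta_in_zariski_closure_limit[OF approx])
    fix i k assume "1 \<le> i" "i \<le> r"
    then show "eventually (\<lambda>N. fps_nth (tpow (inf_prefix q (b N) i)) k = fps_nth (tpow (mu i)) k) sequentially"
      using mu_inf[of i] nth_tpow_min[of k _ "mu i"] unfolding eventually_sequentially inf_prefix_def b_def
      by (intro exI[of _ "Suc k"]) (auto simp: enat_the_enat_min)
  qed
qed

section \<open>Necessity: divisibility of minors\<close>

text \<open>Rows and columns are selected by f and g, repetitions allowed.\<close>

definition minor :: "'a :: comm_ring_1 mat \<Rightarrow> nat \<Rightarrow> (nat \<Rightarrow> nat) \<Rightarrow> (nat \<Rightarrow> nat) \<Rightarrow> 'a" where
  "minor A m f g = det (mat m m (\<lambda>(x, y). A $$ (f x, g y)))"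

definition minors_dvd :: "'a :: comm_ring_1 \<Rightarrow> nat \<Rightarrow> 'a mat \<Rightarrow> bool" where
  "minors_dvd d m A \<longleftrightarrow>
    (\<forall>f g. (\<forall>x<m. f x < dim_row A) \<longrightarrow> (\<forall>y<m. g y < dim_col A) \<longrightarrow> d dvd minor A m f g)"

lemma det_mat_sum_expand:
  fixes c :: "nat \<Rightarrow> nat \<Rightarrow> 'a :: comm_ring_1"
  assumes U: "finite U"
  shows "det (mat m m (\<lambda>(x, y). \<Sum>u\<in>U. c x u * B u y)) =
    (\<Sum>\<phi>\<in>{\<phi>. (\<forall>x\<in>{0..<m}. \<phi> x \<in> U) \<and> (\<forall>x. x \<notin> {0..<m} \<longrightarrow> \<phi> x = x)}.
      (\<Prod>x\<in>{0..<m}. c x (\<phi> x)) * det (mat m m (\<lambda>(x, y). B (\<phi> x) y)))"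
proof -
  define a where "a x u = c x u \<cdot>\<^sub>v vec m (B u)" for x u
  have a: "a \<in> {0..<m} \<rightarrow> U \<rightarrow> carrier_vec m" unfolding a_def by auto
  have "mat m m (\<lambda>(x, y). \<Sum>u\<in>U. c x u * B u y) = mat\<^sub>r m m (\<lambda>x. finsum_vec TYPE('a) m (a x) U)"
    using U by (intro eq_matI) (auto simp: index_finsum_vec a_def)
  moreover have "det (mat\<^sub>r m m (\<lambda>x. a x (\<phi> x))) = (\<Prod>x\<in>{0..<m}. c x (\<phi> x)) * det (mat m m (\<lambda>(x, y). B (\<phi> x) y))"
    for \<phi>
  proof -
    have "mat\<^sub>r m m (\<lambda>x. vec m (B (\<phi> x))) = mat m m (\<lambda>(x, y). B (\<phi> x) y)" by (intro eq_matI) auto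
    then show ?thesis unfolding a_def by (subst det_rows_mul) auto
  qed
  ultimately show ?thesis by (simp add: det_linear_rows_sum[OF U a])
qed


lemma minors_dvd_mult_left:
  assumes A: "A \<in> carrier_mat n nc" and G: "G \<in> carrier_mat nr n" and dvd: "minors_dvd d m A"
  shows "minors_dvd d m (G * A)"
  unfolding minors_dvd_def
proof (intro allI impI)
  fix f g assume f: "\<forall>x<m. f x < dim_row (G * A)" and g: "\<forall>y<m. g y < dim_col (G * A)"
  let ?\<Phi> = "{\<phi>. (\<forall>x\<in>{0..<m}. \<phi> x \<in> {0..<n}) \<and> (\<forall>x. x \<notin> {0..<m} \<longrightarrow> \<phi> x = x)}"
  have "mat m m (\<lambda>(x, y). (G * A) $$ (f x, g y)) = mat m m (\<lambda>(x, y). \<Sum>u\<in>{0..<n}. G $$ (f x, u) * A $$ (u, g y))"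
    using A G f g by (intro eq_matI) (auto simp: scalar_prod_def)
  then have "minor (G * A) m f g = (\<Sum>\<phi>\<in>?\<Phi>. (\<Prod>x\<in>{0..<m}. G $$ (f x, \<phi> x)) * minor A m \<phi> g)"
    unfolding minor_def by (simp add: det_mat_sum_expand)
  also have "d dvd \<dots>"
  proof (rule dvd_sum)
    fix \<phi> assume "\<phi> \<in> ?\<Phi>"
    then have "d dvd minor A m \<phi> g" using dvd A g unfolding minors_dvd_def by auto
    then show "d dvd (\<Prod>x\<in>{0..<m}. G $$ (f x, \<phi> x)) * minor A m \<phi> g" by simp
  qed
  finally show "d dvd minor (G * A) m f g" .
qed

lemma minor_transpose:
  assumes "\<forall>x<m. f x < dim_col A" "\<forall>y<m. g y < dim_row A"
  shows "minor (transpose_mat A) m f g = minor A m g f"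
proof -
  have "mat m m (\<lambda>(x, y). transpose_mat A $$ (f x, g y)) = transpose_mat (mat m m (\<lambda>(x, y). A $$ (g x, f y)))"
    using assms by (intro eq_matI) auto
  then show ?thesis
    unfolding minor_def using det_transpose[of "mat m m (\<lambda>(x, y). A $$ (g x, f y))" m] by simp
qed

lemma minors_dvd_transpose: "minors_dvd d m (transpose_mat A) \<longleftrightarrow> minors_dvd d m A"
  unfolding minors_dvd_def
proof (intro iffI allI impI)
  fix f g assume "\<forall>f g. (\<forall>x<m. f x < dim_row A\<^sup>T) \<longrightarrow> (\<forall>y<m. g y < dim_col A\<^sup>T) \<longrightarrow> d dvd minor A\<^sup>T m f g"
    and "\<forall>x<m. f x < dim_row A" "\<forall>y<m. g y < dim_col A"
  then show "d dvd minor A m f g" using minor_transpose[of m g A f] by fastforce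
next
  fix f g assume "\<forall>f g. (\<forall>x<m. f x < dim_row A) \<longrightarrow> (\<forall>y<m. g y < dim_col A) \<longrightarrow> d dvd minor A m f g"
    and "\<forall>x<m. f x < dim_row A\<^sup>T" "\<forall>y<m. g y < dim_col A\<^sup>T"
  then show "d dvd minor A\<^sup>T m f g" using minor_transpose[of m f A g] by fastforce
qed

lemma minors_dvd_mult_right:
  assumes A: "A \<in> carrier_mat nr n" and H: "H \<in> carrier_mat n nc" and dvd: "minors_dvd d m A"
  shows "minors_dvd d m (A * H)"
proof -
  have "minors_dvd d m (transpose_mat H * transpose_mat A)"
    using A H dvd by (intro minors_dvd_mult_left[of _ n nr]) (auto simp: minors_dvd_transpose)
  then show ?thesis by (simp add: transpose_mult[OF A H, symmetric] minors_dvd_transpose)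
qed

lemma minors_dvd_arc_orbit:
  assumes A: "A \<in> carrier_mat r s" and dvd: "minors_dvd d m A" and B: "B \<in> arc_orbit r s A"
  shows "minors_dvd d m B"
proof -
  obtain g h where g: "g \<in> carrier_mat r r" and h: "h \<in> carrier_mat s s" and B_eq: "B = g * A * h"
    using B unfolding arc_orbit_iff by blast
  show ?thesis
    unfolding B_eq using mult_carrier_mat[OF g A] h minors_dvd_mult_left[OF A g dvd]
    by (rule minors_dvd_mult_right)
qed

lemma zariski_closure_nth_minor:
  assumes A: "A \<in> zariski_closure r s S" and S: "S \<subseteq> arc_points r s"
    and f: "\<forall>x<m. f x < r" and g: "\<forall>y<m. g y < s"
    and van: "\<And>B. B \<in> S \<Longrightarrow> fps_nth (minor B m f g) n = 0"
  shows "fps_nth (minor A m f g) n = 0"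
proof -
  define p where "p x = fps_nth (det (mat m m (\<lambda>(a, b). coord_fps x (f a) (g b)))) n" for x
  have "p \<in> polyfun"
    using fps_polyfun_det[of "\<lambda>x a b. coord_fps x (f a) (g b)" m, OF fps_polyfun_coord]
    unfolding fps_polyfun_def p_def by blast
  moreover have p_minor: "p (arc_coords r s B) = fps_nth (minor B m f g) n" if "B \<in> carrier_mat r s" for B
  proof -
    have "mat m m (\<lambda>(a, b). coord_fps (arc_coords r s B) (f a) (g b)) = mat m m (\<lambda>(a, b). B $$ (f a, g b))"
      using that f g by (intro eq_matI) (auto simp: coord_fps_arc_coords)
    then show ?thesis unfolding p_def minor_def by simp
  qed
  moreover have "\<forall>B\<in>S. p (arc_coords r s B) = 0" using S van p_minor unfolding arc_points_def by auto
  ultimately have "p (arc_coords r s A) = 0" using A unfolding zariski_closure_def by blast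
  then show ?thesis using A p_minor unfolding zariski_closure_def arc_points_def by auto
qed

lemma tpow_add: "tpow (a + b) = tpow a * tpow b"
  unfolding tpow_def by (cases a; cases b) (auto simp: power_add)

lemma prod_tpow: "finite A \<Longrightarrow> (\<Prod>i\<in>A. tpow (w i)) = tpow (\<Sum>i\<in>A. w i)"
  by (induction A rule: finite_induct) (simp_all add: tpow_add, simp add: tpow_def zero_enat_def)

lemma tpow_dvd_tpow: "d \<le> e \<Longrightarrow> tpow d dvd tpow e"
  unfolding tpow_def by (cases d; cases e) (auto intro: le_imp_power_dvd)

lemma nth_eq_0_if_tpow_dvd: "tpow d dvd p \<Longrightarrow> enat n < d \<Longrightarrow> fps_nth p n = 0"
  unfolding tpow_def by (cases d) (auto simp: fps_X_power_mult_nth elim!: dvdE)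

lemma prod_dvd_det_if_col_dvd:
  assumes "\<And>x y. x < m \<Longrightarrow> y < m \<Longrightarrow> c y dvd F x y"
  shows "(\<Prod>y\<in>{0..<m}. c y) dvd det (mat m m (\<lambda>(x, y). F x y))"
proof -
  have "det (mat m m (\<lambda>(x, y). F x y)) = (\<Sum>p\<in>{p. p permutes {0..<m}}. signof p * (\<Prod>x\<in>{0..<m}. F x (p x)))"
    by (subst det_def') (auto intro!: sum.cong prod.cong dest: permutes_in_image)
  also have "(\<Prod>y\<in>{0..<m}. c y) dvd \<dots>"
  proof (rule dvd_sum)
    fix p assume "p \<in> {p. p permutes {0..<m}}"
    then have p: "p permutes {0..<m}" by simp
    have "(\<Prod>y\<in>{0..<m}. c y) = (\<Prod>x\<in>{0..<m}. c (p x))"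
      using prod.permute[OF p, of c] by (simp add: comp_def)
    also have "\<dots> dvd (\<Prod>x\<in>{0..<m}. F x (p x))"
      using assms permutes_in_image[OF p] by (intro prod_dvd_prod) auto
    finally show "(\<Prod>y\<in>{0..<m}. c y) dvd signof p * (\<Prod>x\<in>{0..<m}. F x (p x))" by simp
  qed
  finally show ?thesis .
qed

lemma sum_last_le_sum_subset:
  fixes lam :: "nat \<Rightarrow> 'a :: ordered_comm_monoid_add"
  assumes anti: "antimono_on {1..R} lam"
  shows "n \<le> R \<Longrightarrow> K \<subseteq> {1..n} \<Longrightarrow> card K = m \<Longrightarrow> (\<Sum>k = n + 1 - m..n. lam k) \<le> (\<Sum>k\<in>K. lam k)"
proof (induction n arbitrary: K m)
  case 0 then show ?case by auto
next
  case (Suc n)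
  have finK: "finite K" using Suc.prems(2) finite_subset by blast
  show ?case
  proof (cases "Suc n \<in> K")
    case True
    define K' where "K' = K - {Suc n}"
    have K': "K' \<subseteq> {1..n}" "card K' = m - 1" using Suc.prems True finK unfolding K'_def by auto
    have m1: "1 \<le> m" using True finK Suc.prems(3) card_0_eq by fastforce
    have IH: "(\<Sum>k\<in>{n+1-(m-1)..n}. lam k) \<le> (\<Sum>k\<in>K'. lam k)"
      using Suc.IH[OF _ K'] Suc.prems(1) by simp
    have "(\<Sum>k\<in>K. lam k) = lam (Suc n) + (\<Sum>k\<in>K'. lam k)"
      unfolding K'_def using True finK by (simp add: sum.remove)
    moreover have "(\<Sum>k\<in>{Suc n+1-m..Suc n}. lam k) = lam (Suc n) + (\<Sum>k\<in>{n+1-(m-1)..n}. lam k)"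
    proof -
      have "{Suc n+1-m..Suc n} = insert (Suc n) {n+1-(m-1)..n}" using m1 by auto
      then show ?thesis by simp
    qed
    ultimately show ?thesis using IH by (simp add: add_left_mono)
  next
    case False
    have K: "K \<subseteq> {1..n}"
    proof
      fix x assume "x \<in> K"
      then have "x \<in> {1..Suc n}" "x \<noteq> Suc n" using Suc.prems(2) False by auto
      then show "x \<in> {1..n}" by auto
    qed
    have mr: "m \<le> n" using card_mono[OF _ K] Suc.prems(3) by simp
    have IH: "(\<Sum>k\<in>{n+1-m..n}. lam k) \<le> (\<Sum>k\<in>K. lam k)"
      using Suc.IH[OF _ K Suc.prems(3)] Suc.prems(1) by simp
    have "(\<Sum>k\<in>{Suc n+1-m..Suc n}. lam k) = (\<Sum>k\<in>{n+1-m..n}. lam (Suc k))"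
      using mr sum.shift_bounds_cl_Suc_ivl[of lam "n+1-m" n] by (simp add: Suc_diff_le)
    also have "\<dots> \<le> (\<Sum>k\<in>{n+1-m..n}. lam k)"
      using Suc.prems(1) mr by (intro sum_mono monotone_onD[OF anti]) auto
    finally show ?thesis using IH by simp
  qed
qed

lemma minor_eq_0_if_not_inj:
  assumes "\<not> inj_on g {0..<m}"
  shows "minor A m f g = 0"
proof -
  obtain y1 y2 where y: "y1 < m" "y2 < m" "y1 \<noteq> y2" "g y1 = g y2"
    using assms unfolding inj_on_def by auto
  let ?M = "mat m m (\<lambda>(x, y). A $$ (f x, g y))"
  have "col ?M y1 = col ?M y2" using y by (intro eq_vecI) auto
  then show ?thesis unfolding minor_def using y by (intro det_identical_columns[of ?M m y1 y2]) auto
qed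

lemma sum_last_le_sum_column_parts:
  fixes lam :: "nat \<Rightarrow> enat"
  assumes rs: "r \<le> s" and lam: "antimono_on {1..r} lam"
    and inj: "inj_on g {0..<m}" and g: "\<forall>y<m. g y < s"
  shows "(\<Sum>k = r + 1 - m..r. lam k) \<le> (\<Sum>y\<in>{0..<m}. if s - r \<le> g y then lam (g y - (s - r) + 1) else \<infinity>)"
    (is "_ \<le> (\<Sum>y\<in>{0..<m}. ?w y)")
proof (cases "\<exists>y<m. g y < s - r")
  case True
  then obtain y where y: "y < m" "g y < s - r" by blast
  then have "?w y = \<infinity>" "y \<in> {0..<m}" by simp_all
  then have "\<exists>k\<in>{0..<m}. ?w k = \<infinity>" by blast
  then have "(\<Sum>y\<in>{0..<m}. ?w y) = \<infinity>" by (simp only: sum_eq_infinity_iff[OF finite_atLeastLessThan])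
  then show ?thesis by simp
next
  case False
  define h where "h y = g y - (s - r) + 1" for y
  have ge: "s - r \<le> g y" if "y < m" for y using False that by (meson not_less)
  have "inj_on h {0..<m}"
  proof (rule inj_onI)
    fix y1 y2 assume "y1 \<in> {0..<m}" "y2 \<in> {0..<m}" "h y1 = h y2"
    then have "g y1 = g y2" using ge[of y1] ge[of y2] unfolding h_def by simp
    from inj_onD[OF inj this] show "y1 = y2" using \<open>y1 \<in> _\<close> \<open>y2 \<in> _\<close> .
  qed
  moreover have "h ` {0..<m} \<subseteq> {1..r}"
  proof (rule image_subsetI)
    fix y assume "y \<in> {0..<m}"
    then have "g y < s" "s - r \<le> g y" using g ge by simp_all
    then show "h y \<in> {1..r}" unfolding h_def using rs by simp
  qed
  ultimately have "(\<Sum>k = r + 1 - m..r. lam k) \<le> (\<Sum>k\<in>h ` {0..<m}. lam k)"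
    by (intro sum_last_le_sum_subset[OF lam]) (auto simp: card_image)
  also have "\<dots> = (\<Sum>y\<in>{0..<m}. ?w y)"
    using ge unfolding sum.reindex[OF \<open>inj_on h _\<close>] by (intro sum.cong) (auto simp: h_def)
  finally show ?thesis .
qed

lemma minors_dvd_delta:
  assumes rs: "r \<le> s" and lam: "antimono_on {1..r} lam"
  shows "minors_dvd (tpow (\<Sum>k = r + 1 - m..r. lam k)) m (delta r s lam)"
  unfolding minors_dvd_def
proof (intro allI impI)
  fix f g assume "\<forall>x<m. f x < dim_row (delta r s lam)" "\<forall>y<m. g y < dim_col (delta r s lam)"
  then have f: "\<forall>x<m. f x < r" and g: "\<forall>y<m. g y < s" by simp_all
  define w where "w y = (if s - r \<le> g y then lam (g y - (s - r) + 1) else \<infinity>)" for y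
  have "(\<Prod>y\<in>{0..<m}. tpow (w y)) dvd minor (delta r s lam) m f g"
    unfolding minor_def using f g
    by (intro prod_dvd_det_if_col_dvd) (auto simp: delta_index w_def)
  then have col_dvd: "tpow (\<Sum>y\<in>{0..<m}. w y) dvd minor (delta r s lam) m f g"
    by (simp add: prod_tpow)
  show "tpow (\<Sum>k = r + 1 - m..r. lam k) dvd minor (delta r s lam) m f g"
  proof (cases "inj_on g {0..<m}")
    case True
    then have "(\<Sum>k = r + 1 - m..r. lam k) \<le> (\<Sum>y\<in>{0..<m}. w y)"
      unfolding w_def by (rule sum_last_le_sum_column_parts[OF rs lam _ g])
    then show ?thesis using col_dvd tpow_dvd_tpow dvd_trans by blast
  qed (simp add: minor_eq_0_if_not_inj)
qed

lemma minor_delta_last: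
  assumes "m \<le> r" "r \<le> s"
  shows "minor (delta r s \<nu>) m (\<lambda>x. r - m + x) (\<lambda>y. s - m + y) = tpow (\<Sum>k = r + 1 - m..r. \<nu> k)"
proof -
  have "mat m m (\<lambda>(x, y). delta r s \<nu> $$ (r - m + x, s - m + y)) = mat_diag m (\<lambda>x. tpow (\<nu> (r + 1 - m + x)))"
    using assms by (intro eq_matI) (auto simp: delta_index mat_diag_def Suc_diff_le)
  moreover have "det (mat_diag m d) = (\<Prod>x\<in>{0..<m}. d x)" for d :: "nat \<Rightarrow> complex fps"
    by (subst det_upper_triangular[of _ m]) (auto simp: mat_diag_def prod_list_diag_prod)
  moreover have "(\<Sum>x\<in>{0..<m}. \<nu> (r + 1 - m + x)) = (\<Sum>k = r + 1 - m..r. \<nu> k)"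
    using assms
    by (intro sum.reindex_bij_witness[where i = "\<lambda>k. k - (r + 1 - m)" and j = "\<lambda>x. r + 1 - m + x"]) auto
  ultimately show ?thesis unfolding minor_def by (simp add: prod_tpow)
qed

lemma codom_if_delta_in_zariski_closure:
  assumes rs: "r \<le> s" and lam: "antimono_on {1..r} lam"
    and mu: "delta r s mu \<in> zariski_closure r s (arc_orbit r s (delta r s lam))"
    and i: "1 \<le> i" "i \<le> r"
  shows "(\<Sum>k = i..r. lam k) \<le> (\<Sum>k = i..r. mu k)"
proof (rule ccontr)
  assume "\<not> ?thesis"
  then have less: "(\<Sum>k = i..r. mu k) < (\<Sum>k = i..r. lam k)" by (simp add: not_le)
  then obtain e where e: "(\<Sum>k = i..r. mu k) = enat e" by (cases "\<Sum>k = i..r. mu k") auto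
  define m where "m = r + 1 - i"
  have m: "m \<le> r" "r + 1 - m = i" using i unfolding m_def by auto
  have bounds: "\<forall>x<m. r - m + x < r" "\<forall>y<m. s - m + y < s" using m rs by auto
  have "fps_nth (minor (delta r s mu) m (\<lambda>x. r - m + x) (\<lambda>y. s - m + y)) e = 0"
  proof (rule zariski_closure_nth_minor[OF mu arc_orbit_subset[OF delta_carrier] bounds])
    fix B assume B: "B \<in> arc_orbit r s (delta r s lam)"
    then have "minors_dvd (tpow (\<Sum>k = i..r. lam k)) m B"
      using minors_dvd_delta[OF rs lam] m(2) by (auto intro: minors_dvd_arc_orbit[OF delta_carrier])
    moreover have "B \<in> carrier_mat r s" using arc_orbit_carrier[OF delta_carrier B] .
    ultimately have "tpow (\<Sum>k = i..r. lam k) dvd minor B m (\<lambda>x. r - m + x) (\<lambda>y. s - m + y)"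
      using bounds unfolding minors_dvd_def by auto
    then show "fps_nth (minor B m (\<lambda>x. r - m + x) (\<lambda>y. s - m + y)) e = 0"
      using less e by (intro nth_eq_0_if_tpow_dvd) auto
  qed
  moreover have "minor (delta r s mu) m (\<lambda>x. r - m + x) (\<lambda>y. s - m + y) = fps_X ^ e"
    using minor_delta_last[OF m(1) rs] m(2) e by (simp add: tpow_def)
  ultimately show False by simp
qed

lemma antimono_on_prepartition: "prepartition r lam \<Longrightarrow> antimono_on {1..r} lam"
  unfolding prepartition_def monotone_on_def by auto

theorem theorem4p7:
  fixes r s :: nat and lam mu :: "nat \<Rightarrow> enat"
  assumes "0 < r" and "r \<le> s"
    and "prepartition r lam" and "prepartition r mu"
  shows "arc_orbit r s (delta r s mu) \<subseteq> zariski_closure r s (arc_orbit r s (delta r s lam))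
     \<longleftrightarrow> (\<forall>i \<in> {0..<r}. (\<Sum>k = r - i..r. lam k) \<le> (\<Sum>k = r - i..r. mu k))"
proof -
  have anti: "antimono_on {1..r} lam" "antimono_on {1..r} mu"
    using antimono_on_prepartition assms(3,4) by blast+
  have "arc_orbit r s (delta r s mu) \<subseteq> zariski_closure r s (arc_orbit r s (delta r s lam)) \<longleftrightarrow>
      delta r s mu \<in> zariski_closure r s (arc_orbit r s (delta r s lam))"
    by (rule arc_orbit_subset_zariski_closure_iff) simp_all
  also have "\<dots> \<longleftrightarrow> (\<forall>i \<in> {1..r}. (\<Sum>k = i..r. lam k) \<le> (\<Sum>k = i..r. mu k))"
    using codom_if_delta_in_zariski_closure[OF assms(2) anti(1)]
      delta_in_zariski_closure_if_codom[OF assms(2) anti] by auto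
  also have "\<dots> \<longleftrightarrow> (\<forall>i \<in> {0..<r}. (\<Sum>k = r - i..r. lam k) \<le> (\<Sum>k = r - i..r. mu k))"
  proof
    assume "\<forall>i \<in> {1..r}. (\<Sum>k = i..r. lam k) \<le> (\<Sum>k = i..r. mu k)"
    then show "\<forall>i \<in> {0..<r}. (\<Sum>k = r - i..r. lam k) \<le> (\<Sum>k = r - i..r. mu k)" by auto
  next
    assume le: "\<forall>i \<in> {0..<r}. (\<Sum>k = r - i..r. lam k) \<le> (\<Sum>k = r - i..r. mu k)"
    show "\<forall>i \<in> {1..r}. (\<Sum>k = i..r. lam k) \<le> (\<Sum>k = i..r. mu k)"
    proof
      fix i assume "i \<in> {1..r}"
      then show "(\<Sum>k = i..r. lam k) \<le> (\<Sum>k = i..r. mu k)" using le[rule_format, of "r - i"] by simp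
    qed
  qed
  finally show ?thesis .
qed

end
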